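(* Let $E$ be a finite set, $S\subseteq 2^E$ a powerful set and $e\in E$. Then $e$ is a coloop of $S$ if and only if $\{e\}\in S$.
   Context: A set $S\subseteq 2^E$ is powerful if for every $X\subseteq E$ the number of members of $S$ that are subsets of $X$ is a power of $2$. An element $e\in E$ is a coloop of $S$ if there exists $T\subseteq 2^{E\setminus\{e\}}$ such that $S=\{X,\ X\cup\{e\} : X\in T\}$. *)

theory Defs
  imports Main
begin

definition powerful :: "'a set \<Rightarrow> 'a set set \<Rightarrow> bool" where
  "powerful E S \<longleftrightarrow> S \<subseteq> Pow E \<and>
     (\<forall>X. X \<subseteq> E \<longrightarrow> (\<exists>k::nat. card {A \<in> S. A \<subseteq> X} = 2 ^ k))"

definition coloop :: "'a set \<Rightarrow> 'a set set \<Rightarrow> 'a \<Rightarrow> bool" where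
  "coloop E S e \<longleftrightarrow> (\<exists>T. T \<subseteq> Pow (E - {e}) \<and> S = T \<union> (insert e) ` T)"

end

theory Submission
  imports Defs
begin

text \<open>
  The element e is a coloop of S exactly when X and insert e X lie in S together, for all X avoiding e.
  Assuming {e} in S, this is shown by induction on X: the proper subsets of X in S pair off with
  their extensions by e, so the members of S below insert e X number twice as many, plus one for
  each of X and insert e X that lies in S. This count is a power of two and at least 2, as it
  includes {} and {e}, hence even; so X and insert e X are both in S or both outside it.
\<close>

lemma powerful_empty_mem:
  assumes "powerful E S"
  shows "{} \<in> S"
proof -
  obtain k :: nat where "card {A \<in> S. A \<subseteq> {}} = 2 ^ k"
    using assms unfolding powerful_def by blast
  then have "{A \<in> S. A \<subseteq> {}} \<noteq> {}"
    by (metis card.empty power_not_zero zero_neq_numeral)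
  then show ?thesis by auto
qed

lemma coloop_iff:
  assumes "e \<in> E"
  shows "coloop E S e \<longleftrightarrow> S \<subseteq> Pow E \<and> (\<forall>X \<subseteq> E - {e}. X \<in> S \<longleftrightarrow> insert e X \<in> S)"
proof
  assume "coloop E S e"
  then obtain T where T: "T \<subseteq> Pow (E - {e})" "S = T \<union> insert e ` T"
    unfolding coloop_def by blast
  have e_notin_T: "e \<notin> A" if "A \<in> T" for A
    using T that by auto
  have "X \<in> S \<longleftrightarrow> insert e X \<in> S" if "e \<notin> X" for X
  proof -
    have "X \<in> S \<longleftrightarrow> X \<in> T"
      using T that by auto
    also have "\<dots> \<longleftrightarrow> insert e X \<in> insert e ` T"
    proof
      assume "insert e X \<in> insert e ` T"
      then obtain A where "A \<in> T" "insert e X = insert e A"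
        by blast
      then show "X \<in> T"
        using that e_notin_T by (metis Diff_insert_absorb)
    qed blast
    also have "\<dots> \<longleftrightarrow> insert e X \<in> S"
      using T e_notin_T by blast
    finally show ?thesis .
  qed
  moreover have "S \<subseteq> Pow E"
    using T assms by blast
  ultimately show "S \<subseteq> Pow E \<and> (\<forall>X \<subseteq> E - {e}. X \<in> S \<longleftrightarrow> insert e X \<in> S)"
    by blast
next
  assume "S \<subseteq> Pow E \<and> (\<forall>X \<subseteq> E - {e}. X \<in> S \<longleftrightarrow> insert e X \<in> S)"
  then have S_Pow: "S \<subseteq> Pow E"
    and pair: "\<And>X. X \<subseteq> E - {e} \<Longrightarrow> X \<in> S \<longleftrightarrow> insert e X \<in> S"
    by blast+
  define T where "T = {A \<in> S. e \<notin> A}"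
  have "A \<in> T \<union> insert e ` T" if "A \<in> S" for A
  proof (cases "e \<in> A")
    case True
    have "A - {e} \<subseteq> E - {e}"
      using S_Pow that by blast
    then have "A - {e} \<in> T"
      using pair[of "A - {e}"] that True by (simp add: T_def insert_absorb)
    then show ?thesis
      using True by (metis UnI2 imageI insert_Diff)
  qed (use that in \<open>simp add: T_def\<close>)
  moreover have "insert e A \<in> S" if "A \<in> T" for A
  proof -
    have "A \<subseteq> E - {e}"
      using S_Pow that by (auto simp: T_def)
    then show ?thesis
      using pair that by (simp add: T_def)
  qed
  ultimately have "S = T \<union> insert e ` T"
    by (auto simp: T_def)
  moreover have "T \<subseteq> Pow (E - {e})"
    using S_Pow by (auto simp: T_def)
  ultimately show "coloop E S e"
    unfolding coloop_def by blast
qed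

lemma card_subsets_insert:
  assumes "finite X" and "e \<notin> X"
    and pair: "\<And>A. A \<subset> X \<Longrightarrow> A \<in> S \<longleftrightarrow> insert e A \<in> S"
  shows "card {A \<in> S. A \<subseteq> insert e X}
           = 2 * card {A \<in> S. A \<subset> X} + card (S \<inter> {X, insert e X})"
proof -
  define L where "L = {A \<in> S. A \<subset> X}"
  have "{A \<in> S. A \<subseteq> insert e X} = (L \<union> insert e ` L) \<union> (S \<inter> {X, insert e X})"
  proof (intro equalityI subsetI)
    fix A assume A: "A \<in> {A \<in> S. A \<subseteq> insert e X}"
    show "A \<in> (L \<union> insert e ` L) \<union> (S \<inter> {X, insert e X})"
    proof (cases "e \<in> A")
      case True
      have A_eq: "A = insert e (A - {e})"
        using True by blast
      have "A - {e} \<subseteq> X"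
        using A by blast
      then consider "A - {e} = X" | "A - {e} \<subset> X"
        by blast
      then show ?thesis
      proof cases
        case 1
        then show ?thesis
          using A A_eq by auto
      next
        case 2
        then have "A - {e} \<in> L"
          using pair[of "A - {e}"] A A_eq by (simp add: L_def)
        then show ?thesis
          using A_eq by blast
      qed
    qed (use A in \<open>auto simp: L_def\<close>)
  next
    fix A assume "A \<in> (L \<union> insert e ` L) \<union> (S \<inter> {X, insert e X})"
    then show "A \<in> {A \<in> S. A \<subseteq> insert e X}"
      using pair by (auto simp: L_def)
  qed
  moreover have "finite L"
    using assms(1) finite_subset[of L "Pow X"] by (auto simp: L_def)
  moreover have "card (insert e ` L) = card L"
    using assms(2) by (intro card_image inj_onI) (auto simp: L_def insert_ident)
  moreover have "L \<inter> insert e ` L = {}" "(L \<union> insert e ` L) \<inter> (S \<inter> {X, insert e X}) = {}"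
    using assms(2) by (auto simp: L_def)
  ultimately show ?thesis
    by (simp add: card_Un_disjoint L_def)
qed

lemma powerful_insert_mem_iff:
  assumes "finite E" and "powerful E S" and "{e} \<in> S" and "X \<subseteq> E - {e}"
  shows "X \<in> S \<longleftrightarrow> insert e X \<in> S"
proof -
  have "finite X"
    using assms(1,4) finite_subset by blast
  then show ?thesis
    using assms(4)
  proof (induction X rule: finite_psubset_induct)
    case (psubset X)
    have e_notin: "e \<notin> X"
      using psubset.prems by blast
    have "e \<in> E"
      using assms(2,3) by (auto simp: powerful_def)
    then have "insert e X \<subseteq> E"
      using psubset.prems by blast
    then obtain k :: nat where k: "card {A \<in> S. A \<subseteq> insert e X} = 2 ^ k"
      using assms(2) unfolding powerful_def by blast
    have "finite {A \<in> S. A \<subseteq> insert e X}"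
      using psubset.hyps finite_subset[of _ "Pow (insert e X)"] by auto
    moreover have "{{}, {e}} \<subseteq> {A \<in> S. A \<subseteq> insert e X}"
      using assms(2,3) powerful_empty_mem by blast
    ultimately have "2 \<le> card {A \<in> S. A \<subseteq> insert e X}"
      by (metis card_2_iff card_mono insert_not_empty)
    then have "even (card {A \<in> S. A \<subseteq> insert e X})"
      using k by (cases k) auto
    moreover have "A \<in> S \<longleftrightarrow> insert e A \<in> S" if "A \<subset> X" for A
      using psubset.IH that psubset.prems by blast
    ultimately have "even (card (S \<inter> {X, insert e X}))"
      using card_subsets_insert[OF psubset.hyps e_notin] by simp
    moreover have "X \<noteq> insert e X"
      using e_notin by blast
    ultimately show ?case
      by (cases "X \<in> S"; cases "insert e X \<in> S") auto
  qed
qed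

theorem theorem3:
  fixes E :: "'a set" and S :: "'a set set" and e :: 'a
  assumes "finite E" and "powerful E S" and "e \<in> E"
  shows "coloop E S e \<longleftrightarrow> {e} \<in> S"
proof
  assume "coloop E S e"
  moreover have "{} \<in> S"
    using assms(2) by (rule powerful_empty_mem)
  ultimately show "{e} \<in> S"
    using coloop_iff[OF assms(3)] by blast
next
  assume "{e} \<in> S"
  moreover have "S \<subseteq> Pow E"
    using assms(2) by (simp add: powerful_def)
  ultimately show "coloop E S e"
    using coloop_iff[OF assms(3)] powerful_insert_mem_iff[OF assms(1,2)] by blast
qed

end
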